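(* For every even positive integer $n$, $d(L(n,2n-1)) = n^2 - n$. More precisely, there is a partial coloring of an $n\times n$ square with exactly $n^2-n$ colored entries (all off-diagonal entries colored, all diagonal entries uncolored) that uniquely extends to $L(n,2n-1)$, and no partial coloring with more than $n$ uncolored entries uniquely extends to $L(n,2n-1)$.
   Context: For positive integers $n,k$, let $\mathcal{L}_{n,k}$ be the set of $n\times n$ squares all of whose entries are colored with colors from a fixed set of $k$ colors $\{1,\dots,k\}$ such that any two entries in the same row, or in the same column, have different colors. A partial coloring of an $n\times n$ square assigns colors from $\{1,\dots,k\}$ to some of its entries; the remaining entries are called uncolored. A partial coloring extends to $L(n,k)$ if the uncolored entries can be colored so that the resulting fully colored square lies in $\mathcal{L}_{n,k}$ (keeping the given colors), and it uniquely extends to $L(n,k)$ if there is exactly one such way. A defining set of the $k$-coloring of an $n\times n$ square is the set of colored entries of a partial coloring that uniquely extends to $L(n,k)$; the defining number $d(L(n,k))$ is the minimum cardinality of such a defining set. *)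

theory Defs
  imports Main
begin

definition square :: "nat \<Rightarrow> (nat \<times> nat) set" where
  "square n = {(i, j). i < n \<and> j < n}"

definition in_L :: "nat \<Rightarrow> nat \<Rightarrow> (nat \<times> nat \<Rightarrow> nat) \<Rightarrow> bool" where
  "in_L n k f \<longleftrightarrow>
     (\<forall>e\<in>square n. f e \<in> {1..k}) \<and>
     (\<forall>i<n. \<forall>j<n. \<forall>j'<n. j \<noteq> j' \<longrightarrow> f (i, j) \<noteq> f (i, j')) \<and>
     (\<forall>j<n. \<forall>i<n. \<forall>i'<n. i \<noteq> i' \<longrightarrow> f (i, j) \<noteq> f (i', j))"

definition partial_coloring :: "nat \<Rightarrow> nat \<Rightarrow> (nat \<times> nat \<Rightarrow> nat option) \<Rightarrow> bool" where
  "partial_coloring n k p \<longleftrightarrow> dom p \<subseteq> square n \<and> ran p \<subseteq> {1..k}"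

definition is_extension :: "nat \<Rightarrow> nat \<Rightarrow> (nat \<times> nat \<Rightarrow> nat option) \<Rightarrow> (nat \<times> nat \<Rightarrow> nat) \<Rightarrow> bool" where
  "is_extension n k p f \<longleftrightarrow> in_L n k f \<and> (\<forall>e\<in>dom p. p e = Some (f e))"

definition extends :: "nat \<Rightarrow> nat \<Rightarrow> (nat \<times> nat \<Rightarrow> nat option) \<Rightarrow> bool" where
  "extends n k p \<longleftrightarrow> (\<exists>f. is_extension n k p f)"

definition uniquely_extends :: "nat \<Rightarrow> nat \<Rightarrow> (nat \<times> nat \<Rightarrow> nat option) \<Rightarrow> bool" where
  "uniquely_extends n k p \<longleftrightarrow>
     (\<exists>f. is_extension n k p f \<and>
        (\<forall>g. is_extension n k p g \<longrightarrow> (\<forall>e\<in>square n. g e = f e)))"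

definition defining_number :: "nat \<Rightarrow> nat \<Rightarrow> nat" where
  "defining_number n k =
     Min ((\<lambda>p. card (dom p)) ` {p. partial_coloring n k p \<and> uniquely_extends n k p})"

end

theory Submission
  imports Defs "HOL-Number_Theory.Cong"
begin

(* Lower bound: if two uncolored entries (i,j), (i,j') share a row, take any extension f.
   If f(i,j') reappears in column j (or f(i,j) in column j'), row i and column j together
   show at most 2n-2 < 2n-1 colours, so (i,j) can be recolored; otherwise the two entries
   can be swapped.  Hence a uniquely extending partial coloring has at most n uncolored
   entries.

   Upper bound: for even n take a 1-factorization of K_n, i.e. a symmetric colouring of the
   off-diagonal entries with n-1 colours, each row using every colour once.  Shift the colours
   below the diagonal by n-1.  Then the off-diagonal entries of row i and of column i together
   carry all colours 1..2n-2, so the diagonal is forced to be 2n-1. *)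

lemma square_eq: "square n = {..<n} \<times> {..<n}"
  unfolding square_def by auto

lemma finite_square [simp]: "finite (square n)"
  by (simp add: square_eq)

lemma card_square: "card (square n) = n * n"
  by (simp add: square_eq card_cartesian_product)

lemma card_square_diff_dom:
  assumes "partial_coloring n k p"
  shows "card (square n - dom p) = n * n - card (dom p)"
proof -
  have "dom p \<subseteq> square n" using assms unfolding partial_coloring_def by blast
  then show ?thesis
    by (simp add: card_Diff_subset card_square finite_subset)
qed

lemma partial_coloring_restrict:
  assumes "in_L n k f" "A \<subseteq> square n"
  shows "partial_coloring n k ((Some \<circ> f) |` A)"
  using assms unfolding partial_coloring_def in_L_def ran_def restrict_map_def
  by (auto split: if_splits)

lemma is_extension_restrict:
  assumes "in_L n k f"
  shows "is_extension n k ((Some \<circ> f) |` A) f"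
  using assms unfolding is_extension_def restrict_map_def by (auto split: if_splits)

lemma not_uniquely_extends_if_recolorable:
  assumes f: "is_extension n k p f" and g: "in_L n k g"
    and agree: "\<And>e. e \<in> dom p \<Longrightarrow> g e = f e"
    and "e \<in> square n" "g e \<noteq> f e"
  shows "\<not> uniquely_extends n k p"
proof -
  have "is_extension n k p g"
    using f g agree unfolding is_extension_def by simp
  then show ?thesis
    using f assms(4,5) unfolding uniquely_extends_def by metis
qed

lemma uniquely_extends_if_forced:
  assumes f: "is_extension n k p f"
    and forced: "\<And>i j c. (i, j) \<in> square n - dom p \<Longrightarrow> c \<in> {1..k} \<Longrightarrow> c \<noteq> f (i, j) \<Longrightarrow>
        (\<exists>j'<n. j' \<noteq> j \<and> p (i, j') = Some c) \<or> (\<exists>i'<n. i' \<noteq> i \<and> p (i', j) = Some c)"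
  shows "uniquely_extends n k p"
  unfolding uniquely_extends_def
proof (intro exI conjI allI impI ballI)
  show "is_extension n k p f" by (fact f)
  fix g e
  assume g: "is_extension n k p g" and "e \<in> square n"
  then obtain i j where e: "e = (i, j)" "i < n" "j < n" by (auto simp: square_def)
  show "g e = f e"
  proof (rule ccontr)
    assume differ: "g e \<noteq> f e"
    then have "e \<notin> dom p" using f g unfolding is_extension_def by force
    have g_L: "in_L n k g" and "g e \<in> {1..k}"
      using g \<open>e \<in> square n\<close> unfolding is_extension_def in_L_def by auto
    have g_dom: "p e' = Some c \<Longrightarrow> g e' = c" for e' c
      using g unfolding is_extension_def by (metis domI option.inject)
    from forced[of i j "g e"] consider
        j' where "j' < n" "j' \<noteq> j" "p (i, j') = Some (g (i, j))"
      | i' where "i' < n" "i' \<noteq> i" "p (i', j) = Some (g (i, j))"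
      using \<open>e \<notin> dom p\<close> \<open>e \<in> square n\<close> \<open>g e \<in> {1..k}\<close> differ e(1) by blast
    then show False
    proof cases
      case 1
      then show False using g_L g_dom e unfolding in_L_def by metis
    next
      case 2
      then show False using g_L g_dom e unfolding in_L_def by metis
    qed
  qed
qed

lemma defining_number_eqI:
  assumes "partial_coloring n k p" "uniquely_extends n k p" "card (dom p) = m"
    and "\<And>q. partial_coloring n k q \<Longrightarrow> uniquely_extends n k q \<Longrightarrow> m \<le> card (dom q)"
  shows "defining_number n k = m"
  unfolding defining_number_def
proof (rule Min_eqI)
  have "card (dom q) \<le> n * n" if "partial_coloring n k q" for q
    using that card_mono[of "square n" "dom q"] card_square unfolding partial_coloring_def by simp
  then show "finite ((\<lambda>p. card (dom p)) ` {p. partial_coloring n k p \<and> uniquely_extends n k p})"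
    by (auto intro: finite_subset[of _ "{..n * n}"])
qed (use assms in auto)

lemma in_L_fun_upd:
  assumes f: "in_L n k f" and "v \<in> {1..k}"
    and row: "\<And>j'. j' < n \<Longrightarrow> j' \<noteq> j \<Longrightarrow> f (i, j') \<noteq> v"
    and col: "\<And>i'. i' < n \<Longrightarrow> i' \<noteq> i \<Longrightarrow> f (i', j) \<noteq> v"
  shows "in_L n k (f((i, j) := v))"
  unfolding in_L_def
proof (intro conjI allI impI ballI)
  show "(f((i, j) := v)) e \<in> {1..k}" if "e \<in> square n" for e
    using f that \<open>v \<in> {1..k}\<close> unfolding in_L_def by auto
  show "(f((i, j) := v)) (a, b) \<noteq> (f((i, j) := v)) (a, b')"
    if "a < n" "b < n" "b' < n" "b \<noteq> b'" for a b b'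
    using f that row[of b] row[of b'] unfolding in_L_def by auto
  show "(f((i, j) := v)) (a, b) \<noteq> (f((i, j) := v)) (a', b)"
    if "b < n" "a < n" "a' < n" "a \<noteq> a'" for a a' b
    using f that col[of a] col[of a'] unfolding in_L_def by auto
qed

lemma in_L_swap_in_row:
  assumes f: "in_L n k f" and "i < n" "j < n" "j' < n"
    and col_j: "\<And>r. r < n \<Longrightarrow> r \<noteq> i \<Longrightarrow> f (r, j) \<noteq> f (i, j')"
    and col_j': "\<And>r. r < n \<Longrightarrow> r \<noteq> i \<Longrightarrow> f (r, j') \<noteq> f (i, j)"
  shows "in_L n k (f((i, j) := f (i, j'), (i, j') := f (i, j)))" (is "in_L n k ?g")
  unfolding in_L_def
proof (intro conjI allI impI ballI)
  show "?g e \<in> {1..k}" if "e \<in> square n" for e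
    using f that assms(2-4) unfolding in_L_def square_def by auto
  define \<sigma> where "\<sigma> b = (if b = j then j' else if b = j' then j else b)" for b
  have row_i: "?g (i, b) = f (i, \<sigma> b)" for b
    unfolding \<sigma>_def by auto
  show "?g (a, b) \<noteq> ?g (a, b')" if "a < n" "b < n" "b' < n" "b \<noteq> b'" for a b b'
  proof (cases "a = i")
    case True
    have "\<sigma> b < n" "\<sigma> b' < n" "\<sigma> b \<noteq> \<sigma> b'"
      using that assms(3,4) unfolding \<sigma>_def by auto
    then show ?thesis using f True \<open>a < n\<close> row_i unfolding in_L_def by metis
  qed (use f that in \<open>auto simp: in_L_def\<close>)
  show "?g (a, b) \<noteq> ?g (a', b)" if "b < n" "a < n" "a' < n" "a \<noteq> a'" for a a' b
    using f that col_j[of a] col_j[of a'] col_j'[of a] col_j'[of a'] unfolding in_L_def by auto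
qed

lemma exists_color_avoiding_row_and_col:
  assumes f: "in_L n k f" and "2 * n - 1 \<le> k" and "i < n" "j < n"
    and repeat: "r < n" "r \<noteq> i" "j' < n" "j' \<noteq> j" "f (r, j) = f (i, j')"
  obtains v where "v \<in> {1..k}" "\<And>b. b < n \<Longrightarrow> f (i, b) \<noteq> v" "\<And>a. a < n \<Longrightarrow> f (a, j) \<noteq> v"
proof -
  define R where "R = {i} \<times> {..<n}"
  define C where "C = {..<n} \<times> {j}"
  have "R \<inter> C = {(i, j)}" using assms(3,4) unfolding R_def C_def by auto
  then have "card (R \<union> C) = 2 * n - 1"
    using card_Un_Int[of R C] assms(3) unfolding R_def C_def by (simp add: card_cartesian_product)
  moreover have "\<not> inj_on f (R \<union> C)"
    using repeat unfolding R_def C_def inj_on_def by blast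
  then have "card (f ` (R \<union> C)) < card (R \<union> C)"
    using card_image_le[of "R \<union> C" f] inj_on_iff_eq_card[of "R \<union> C" f]
    unfolding R_def C_def by fastforce
  ultimately have "card (f ` (R \<union> C)) < card {1..k}" using assms(2) by simp
  then have "\<not> {1..k} \<subseteq> f ` (R \<union> C)"
    using card_mono[of "f ` (R \<union> C)" "{1..k}"] unfolding R_def C_def by auto
  then obtain v where "v \<in> {1..k}" "v \<notin> f ` (R \<union> C)" by blast
  then show thesis using that unfolding R_def C_def by blast
qed

lemma not_uniquely_extends_if_uncolored_pair_in_row:
  assumes k: "2 * n - 1 \<le> k"
    and uncolored: "(i, j) \<in> square n - dom p" "(i, j') \<in> square n - dom p" "j \<noteq> j'"
  shows "\<not> uniquely_extends n k p"
proof
  assume "uniquely_extends n k p"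
  then obtain f where f: "is_extension n k p f" unfolding uniquely_extends_def by blast
  then have f_L: "in_L n k f" unfolding is_extension_def by blast
  have recolor: "\<not> uniquely_extends n k p"
    if cell: "(i, b) \<in> square n - dom p" "b' < n" "b' \<noteq> b"
      "r < n" "r \<noteq> i" "f (r, b) = f (i, b')" for b b' r
  proof -
    have "i < n" "b < n" using cell(1) unfolding square_def by auto
    obtain v where v: "v \<in> {1..k}"
        "\<And>c. c < n \<Longrightarrow> f (i, c) \<noteq> v" "\<And>a. a < n \<Longrightarrow> f (a, b) \<noteq> v"
      using exists_color_avoiding_row_and_col[OF f_L k \<open>i < n\<close> \<open>b < n\<close> cell(4,5,2,3,6)]
      by blast
    have "in_L n k (f((i, b) := v))"
      using in_L_fun_upd[OF f_L v(1)] v(2,3) by blast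
    moreover have "(f((i, b) := v)) e = f e" if "e \<in> dom p" for e
      using that \<open>(i, b) \<in> square n - dom p\<close> by auto
    moreover have "(f((i, b) := v)) (i, b) \<noteq> f (i, b)" using v(2)[OF \<open>b < n\<close>] by simp
    ultimately show ?thesis
      using not_uniquely_extends_if_recolorable[OF f] cell(1) by blast
  qed
  have "i < n" "j < n" "j' < n" using uncolored unfolding square_def by auto
  consider r where "r < n" "r \<noteq> i" "f (r, j) = f (i, j')"
    | r where "r < n" "r \<noteq> i" "f (r, j') = f (i, j)"
    | "\<And>r. r < n \<Longrightarrow> r \<noteq> i \<Longrightarrow> f (r, j) \<noteq> f (i, j')"
      "\<And>r. r < n \<Longrightarrow> r \<noteq> i \<Longrightarrow> f (r, j') \<noteq> f (i, j)"
    by blast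
  then show False
  proof cases
    case 1
    then show False using recolor uncolored \<open>j' < n\<close> \<open>uniquely_extends n k p\<close> by blast
  next
    case 2
    then show False using recolor uncolored \<open>j < n\<close> \<open>uniquely_extends n k p\<close> by blast
  next
    case 3
    define g where "g = f((i, j) := f (i, j'), (i, j') := f (i, j))"
    have "in_L n k g"
      unfolding g_def using in_L_swap_in_row[OF f_L \<open>i < n\<close> \<open>j < n\<close> \<open>j' < n\<close>] 3 by blast
    moreover have "g e = f e" if "e \<in> dom p" for e
      using that uncolored unfolding g_def by auto
    moreover have "g (i, j) \<noteq> f (i, j)"
      using f_L \<open>i < n\<close> \<open>j < n\<close> \<open>j' < n\<close> \<open>j \<noteq> j'\<close> unfolding g_def in_L_def by auto
    ultimately show False
      using not_uniquely_extends_if_recolorable[OF f] uncolored(1) \<open>uniquely_extends n k p\<close>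
      by blast
  qed
qed

lemma two_in_some_row:
  assumes "U \<subseteq> square n" "n < card U"
  obtains i j j' where "(i, j) \<in> U" "(i, j') \<in> U" "j \<noteq> j'"
proof -
  have "fst ` U \<subseteq> {..<n}" using assms(1) unfolding square_def by auto
  then have "card (fst ` U) < card U"
    using card_mono[of "{..<n}" "fst ` U"] assms(2) by simp
  then have "\<not> inj_on fst U" using card_image by fastforce
  then show thesis using that unfolding inj_on_def by fastforce
qed

lemma not_uniquely_extends_if_many_uncolored:
  assumes "2 * n - 1 \<le> k" "n < card (square n - dom p)"
  shows "\<not> uniquely_extends n k p"
proof -
  obtain i j j' where "(i, j) \<in> square n - dom p" "(i, j') \<in> square n - dom p" "j \<noteq> j'"
    using two_in_some_row[OF Diff_subset assms(2)] by blast
  then show ?thesis by (rule not_uniquely_extends_if_uncolored_pair_in_row[OF assms(1)])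
qed

(* The classical 1-factorization of K_n (n even): player n-1 stays fixed, players i, j < n-1
   meet in round (i + j) mod (n-1), and i meets n-1 in round 2i mod (n-1), the one round in
   which i has no other opponent. *)
definition round_robin :: "nat \<Rightarrow> nat \<Rightarrow> nat \<Rightarrow> nat" where
  "round_robin n i j =
     (if i = n - 1 then 2 * j mod (n - 1)
      else if j = n - 1 then 2 * i mod (n - 1)
      else (i + j) mod (n - 1))"

lemma round_robin_commute: "round_robin n i j = round_robin n j i"
  unfolding round_robin_def by (simp add: add.commute)

lemma round_robin_less:
  assumes "i < n" "j < n" "i \<noteq> j"
  shows "round_robin n i j < n - 1"
  using assms unfolding round_robin_def by auto

lemma round_robin_inj:
  assumes "even n" "i < n" "j1 < n" "j2 < n" "j1 \<noteq> i" "j2 \<noteq> i"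
    and eq: "round_robin n i j1 = round_robin n i j2"
  shows "j1 = j2"
proof -
  define N where "N = n - 1"
  have "odd N" using assms(1,2) unfolding N_def by (cases n) auto
  then have "coprime 2 N" by simp
  have mod_inj: "x = y" if "[x = y] (mod N)" "x < N" "y < N" for x y
    using that cong_less_modulus_unique_nat by blast
  consider "i = N" | "i < N" "j1 < N" "j2 < N" | "i < N" "j1 = N" "j2 < N"
    | "i < N" "j1 < N" "j2 = N" | "j1 = N" "j2 = N"
    using assms(2-4) unfolding N_def by linarith
  then show ?thesis
  proof cases
    case 1
    then have "[2 * j1 = 2 * j2] (mod N)"
      using eq assms(5,6) by (simp add: round_robin_def N_def cong_def)
    then show ?thesis using 1 assms(3-6) mod_inj \<open>coprime 2 N\<close> cong_mult_lcancel_nat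
      unfolding N_def by fastforce
  next
    case 2
    then have "[i + j1 = i + j2] (mod N)" using eq by (simp add: round_robin_def N_def cong_def)
    then show ?thesis using 2 mod_inj cong_add_lcancel_nat by blast
  next
    case 3
    then have "[i + i = i + j2] (mod N)"
      using eq by (simp add: round_robin_def N_def cong_def mult_2)
    then show ?thesis using 3 assms(6) mod_inj cong_add_lcancel_nat by blast
  next
    case 4
    then have "[i + j1 = i + i] (mod N)"
      using eq by (simp add: round_robin_def N_def cong_def mult_2)
    then show ?thesis using 4 assms(5) mod_inj cong_add_lcancel_nat by blast
  qed simp
qed

definition split_color :: "nat \<Rightarrow> nat \<Rightarrow> nat \<Rightarrow> nat" where
  "split_color n i j = round_robin n i j + (if i < j then 1 else n)"

lemma split_color_commute: "split_color n j i = round_robin n i j + (if j < i then 1 else n)"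
  unfolding split_color_def by (simp add: round_robin_commute)

lemma split_color_range:
  assumes "i < n" "j < n" "i \<noteq> j"
  shows "split_color n i j \<in> {1..2 * n - 2}"
  using round_robin_less[OF assms] unfolding split_color_def by auto

lemma round_robin_offset_inj:
  assumes "even n" "i < n" "j1 < n" "j2 < n" "j1 \<noteq> i" "j2 \<noteq> i"
    and "round_robin n i j1 + (if b1 then 1 else n) = round_robin n i j2 + (if b2 then 1 else n)"
  shows "b1 = b2 \<and> j1 = j2"
proof -
  have "round_robin n i j1 < n - 1" "round_robin n i j2 < n - 1"
    using round_robin_less assms(2-6) by auto
  then have "b1 = b2" using assms(7) by (auto split: if_splits)
  then show ?thesis using round_robin_inj[OF assms(1-6)] assms(7) by auto
qed

lemma split_color_row_inj:
  assumes "even n" "i < n" "j1 < n" "j2 < n" "j1 \<noteq> i" "j2 \<noteq> i"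
    and "split_color n i j1 = split_color n i j2"
  shows "j1 = j2"
  using round_robin_offset_inj[OF assms(1-6)] assms(7) unfolding split_color_def by blast

lemma split_color_col_inj:
  assumes "even n" "i < n" "j1 < n" "j2 < n" "j1 \<noteq> i" "j2 \<noteq> i"
    and "split_color n j1 i = split_color n j2 i"
  shows "j1 = j2"
  using round_robin_offset_inj[OF assms(1-6)] assms(7) unfolding split_color_commute by blast

lemma split_color_row_neq_col:
  assumes "even n" "i < n" "j1 < n" "j2 < n" "j1 \<noteq> i" "j2 \<noteq> i"
  shows "split_color n i j1 \<noteq> split_color n j2 i"
  using round_robin_offset_inj[OF assms, of "i < j1" "j2 < i"] assms(5)
    split_color_def[of n i j1] split_color_commute[of n j2 i] by auto

lemma split_colors_at_diagonal:
  assumes "even n" "i < n"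
  shows "split_color n i ` ({..<n} - {i}) \<union> (\<lambda>j. split_color n j i) ` ({..<n} - {i})
         = {1..2 * n - 2}"
    (is "?R \<union> ?C = _")
proof (rule card_subset_eq)
  show "?R \<union> ?C \<subseteq> {1..2 * n - 2}"
    using split_color_range assms(2) by fastforce
  have card_D: "card ({..<n} - {i}) = n - 1" using assms(2) by simp
  have "card ?R = n - 1"
    using card_D split_color_row_inj[OF assms] by (subst card_image) (auto intro: inj_onI)
  moreover have "card ?C = n - 1"
    using card_D split_color_col_inj[OF assms] by (subst card_image) (auto intro: inj_onI)
  moreover have "?R \<inter> ?C = {}" using split_color_row_neq_col[OF assms] by fastforce
  ultimately show "card (?R \<union> ?C) = card {1..2 * n - 2}"
    using card_Un_disjoint[of ?R ?C] assms by simp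
qed simp

definition latin_completion :: "nat \<Rightarrow> nat \<times> nat \<Rightarrow> nat" where
  "latin_completion n = (\<lambda>(i, j). if i = j then 2 * n - 1 else split_color n i j)"

definition off_diagonal_coloring :: "nat \<Rightarrow> nat \<times> nat \<Rightarrow> nat option" where
  "off_diagonal_coloring n = (Some \<circ> latin_completion n) |` {(i, j). i < n \<and> j < n \<and> i \<noteq> j}"

lemma in_L_latin_completion:
  assumes "even n" "0 < n"
  shows "in_L n (2 * n - 1) (latin_completion n)"
  unfolding in_L_def
proof (intro conjI allI impI ballI)
  show "latin_completion n e \<in> {1..2 * n - 1}" if "e \<in> square n" for e
    using that split_color_range assms(2) by (fastforce simp: latin_completion_def square_def)
  show "latin_completion n (i, j) \<noteq> latin_completion n (i, j')"
    if "i < n" "j < n" "j' < n" "j \<noteq> j'" for i j j'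
    using that split_color_range[of i n j] split_color_range[of i n j']
      split_color_row_inj[OF assms(1), of i j j']
    by (auto simp: latin_completion_def)
  show "latin_completion n (i, j) \<noteq> latin_completion n (i', j)"
    if "j < n" "i < n" "i' < n" "i \<noteq> i'" for i i' j
    using that split_color_range[of i n j] split_color_range[of i' n j]
      split_color_col_inj[OF assms(1), of j i i']
    by (auto simp: latin_completion_def)
qed

lemma dom_off_diagonal_coloring:
  "dom (off_diagonal_coloring n) = {(i, j). i < n \<and> j < n \<and> i \<noteq> j}"
  unfolding off_diagonal_coloring_def by auto

lemma card_off_diagonal: "card {(i, j). i < n \<and> j < n \<and> (i::nat) \<noteq> j} = n ^ 2 - n"
proof -
  have "{(i, j). i < n \<and> j < n \<and> i \<noteq> j} = square n - (\<lambda>i. (i, i)) ` {..<n}"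
    unfolding square_def by auto
  moreover have "card ((\<lambda>i. (i, i)) ` {..<n}) = n" by (simp add: card_image inj_on_def)
  ultimately show ?thesis
    by (simp add: card_Diff_subset card_square square_def power2_eq_square image_subset_iff)
qed

lemma uniquely_extends_off_diagonal_coloring:
  assumes "even n" "0 < n"
  shows "uniquely_extends n (2 * n - 1) (off_diagonal_coloring n)"
proof (rule uniquely_extends_if_forced)
  show "is_extension n (2 * n - 1) (off_diagonal_coloring n) (latin_completion n)"
    unfolding off_diagonal_coloring_def
    by (rule is_extension_restrict[OF in_L_latin_completion[OF assms]])
  fix i j c
  assume "(i, j) \<in> square n - dom (off_diagonal_coloring n)"
    and c: "c \<in> {1..2 * n - 1}" "c \<noteq> latin_completion n (i, j)"
  then have "j = i" "i < n" unfolding dom_off_diagonal_coloring square_def by auto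
  with c have "c \<in> {1..2 * n - 2}" by (auto simp: latin_completion_def)
  then obtain j' where "j' < n" "j' \<noteq> i" "c = split_color n i j' \<or> c = split_color n j' i"
    using split_colors_at_diagonal[OF assms(1) \<open>i < n\<close>] by blast
  then show "(\<exists>j'<n. j' \<noteq> j \<and> off_diagonal_coloring n (i, j') = Some c)
      \<or> (\<exists>i'<n. i' \<noteq> i \<and> off_diagonal_coloring n (i', j) = Some c)"
    using \<open>j = i\<close> \<open>i < n\<close> by (auto simp: off_diagonal_coloring_def latin_completion_def)
qed

theorem mainTheorem4:
  fixes n :: nat
  assumes "even n" and "0 < n"
  shows "defining_number n (2 * n - 1) = n ^ 2 - n
       \<and> (\<exists>p. partial_coloring n (2 * n - 1) p
              \<and> dom p = {(i, j). i < n \<and> j < n \<and> i \<noteq> j}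
              \<and> card (dom p) = n ^ 2 - n
              \<and> uniquely_extends n (2 * n - 1) p)
       \<and> (\<forall>p. partial_coloring n (2 * n - 1) p \<and> card (square n - dom p) > n
              \<longrightarrow> \<not> uniquely_extends n (2 * n - 1) p)"
proof -
  let ?k = "2 * n - 1"
  have lower: "\<not> uniquely_extends n ?k p" if "card (square n - dom p) > n" for p
    using not_uniquely_extends_if_many_uncolored that by simp
  have partial: "partial_coloring n ?k (off_diagonal_coloring n)"
    unfolding off_diagonal_coloring_def
    by (rule partial_coloring_restrict[OF in_L_latin_completion[OF assms]]) (auto simp: square_def)
  have card: "card (dom (off_diagonal_coloring n)) = n ^ 2 - n"
    by (simp add: dom_off_diagonal_coloring card_off_diagonal)
  have unique: "uniquely_extends n ?k (off_diagonal_coloring n)"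
    by (rule uniquely_extends_off_diagonal_coloring[OF assms])
  have "defining_number n ?k = n ^ 2 - n"
  proof (rule defining_number_eqI[OF partial unique card])
    fix q
    assume "partial_coloring n ?k q" "uniquely_extends n ?k q"
    then have "n * n - card (dom q) \<le> n"
      using lower[of q] card_square_diff_dom[of n ?k q] by fastforce
    then show "n ^ 2 - n \<le> card (dom q)" unfolding power2_eq_square by linarith
  qed
  then show ?thesis
    using partial card unique lower dom_off_diagonal_coloring by blast
qed

end
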